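(* Fix an integer $k\ge2$ and, for each integer $n>k$, an arbitrary $\xi(k;n)\in(0,1)$ with $P_{n,k}(\xi(k;n))=Q_{n,k}(\xi(k;n))$. Let $\alpha=\limsup_{n\to\infty}\xi(k;n)^{n-1}$, and let $(n_p)_{p\in\mathbb N}$ be a strictly increasing sequence of integers $>k$ with $\alpha_p:=\xi(k;n_p)^{n_p-1}\to\alpha$ as $p\to\infty$. Then $\alpha=\lim_{p\to\infty}\alpha_p=0$.
   Context: For integers $k\ge2$, $n\ge1$ and $x\in\mathbb R$: $P_{n,k}(x)=\left(1+\frac{x^{n-1}}{2}\right)^{k+1}-\left(1-\frac{x^{n-1}}{2}\right)^{k+1}$, and for $n>k$: $Q_{n,k}(x)=(k+1)x^{n-k}$. (Solutions $\xi(k;n)\in(0,1)$ exist for every $n>k$.) *)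

theory Defs
  imports "HOL-Analysis.Analysis"
begin

definition P :: "nat \<Rightarrow> nat \<Rightarrow> real \<Rightarrow> real" where
  "P n k x = (1 + x ^ (n - 1) / 2) ^ (k + 1) - (1 - x ^ (n - 1) / 2) ^ (k + 1)"

definition Q :: "nat \<Rightarrow> nat \<Rightarrow> real \<Rightarrow> real" where
  "Q n k x = real (k + 1) * x ^ (n - k)"

end

theory Submission
  imports Defs "HOL-Real_Asymp.Real_Asymp"
begin

(* Write y = x^(n-1) for a root x \<in> (0,1) of P n k x = Q n k x.
   Keeping only the terms j = 1 and j = 3 of the binomial expansion of
   (1 + y/2)^(k+1) - (1 - y/2)^(k+1) turns the equation into
     C y^3 \<le> 4 (k+1) (x^(n-k) - y),        C = (k+1 choose 3),
   and Bernoulli's inequality bounds the gap x^(n-k) - x^(n-1) by (k-1)(1-x).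
   A second use of Bernoulli gives (n-1)(1-x) x^(n-1) \<le> 1.  Multiplying,
   y^4 (n-1) \<le> K with K depending only on k, so y \<le> (K/(n-1))^(1/4) \<rightarrow> 0.
   Hence the WHOLE sequence \<xi> n ^ (n-1) tends to 0; in particular every
   subsequence does, and the limit \<alpha> of the given subsequence is 0.
   The file proves the three elementary estimates, combines them into the
   quartic bound, derives convergence of the full sequence, and concludes. *)

text \<open>Odd part of a binomial expansion: the terms of index 1 and 3 of
  (1+a)^m - (1-a)^m are a lower bound, since all terms are nonnegative.\<close>
lemma binomial_odd_difference_lower_bound:
  fixes a :: real
  assumes a: "a \<ge> 0" and m: "m \<ge> 3"
  shows "2 * real m * a + 2 * real (m choose 3) * a ^ 3 \<le> (1 + a) ^ m - (1 - a) ^ m"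
proof -
  define summand where "summand j = real (m choose j) * (a ^ j - (-a) ^ j)" for j
  have "(1 + a) ^ m - (1 - a) ^ m = (\<Sum>j\<le>m. summand j)"
    using binomial_ring[of a 1 m] binomial_ring[of "-a" 1 m]
    by (simp add: summand_def add.commute sum_subtractf[symmetric] algebra_simps)
  moreover have "(\<Sum>j\<in>{1,3}. summand j) \<le> (\<Sum>j\<le>m. summand j)"
  proof (rule sum_mono2)
    show "{1, 3} \<subseteq> {..m}" using m by auto
    show "0 \<le> summand j" for j
      using a by (cases "even j") (auto simp: summand_def)
  qed simp
  moreover have "(\<Sum>j\<in>{1,3}. summand j) = 2 * real m * a + 2 * real (m choose 3) * a ^ 3"
    by (simp add: summand_def)
  ultimately show ?thesis by simp
qed

lemma one_minus_power_le:
  fixes x :: real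
  assumes "0 \<le> x" "x \<le> 1"
  shows "1 - x ^ j \<le> real j * (1 - x)"
  using Bernoulli_inequality[of "x - 1" j] assms by (simp add: algebra_simps)

lemma power_diff_le:
  fixes x :: real
  assumes x: "0 \<le> x" "x \<le> 1"
  shows "x ^ i - x ^ (i + j) \<le> real j * (1 - x)"
proof -
  have "x ^ i - x ^ (i + j) = x ^ i * (1 - x ^ j)" by (simp add: power_add algebra_simps)
  also have "\<dots> \<le> 1 * (1 - x ^ j)"
    using x by (intro mult_right_mono) (auto simp: power_le_one)
  also have "\<dots> \<le> real j * (1 - x)" using one_minus_power_le[OF x] by simp
  finally show ?thesis .
qed

text \<open>The weight m (1-x) x^m is at most 1 on [0,1]: with t = 1 - x,
  x^m (1 + m t) \<le> x^m (1+t)^m = (1 - t^2)^m \<le> 1.\<close>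
lemma power_times_gap_le_one:
  fixes x :: real
  assumes x: "0 \<le> x" "x \<le> 1"
  shows "real m * (1 - x) * x ^ m \<le> 1"
proof -
  define t where "t = 1 - x"
  have t: "0 \<le> t" "t \<le> 1" using x by (auto simp: t_def)
  have "real m * (1 - x) * x ^ m \<le> x ^ m * (1 + real m * t)"
    using x by (simp add: t_def algebra_simps)
  also have "\<dots> \<le> x ^ m * (1 + t) ^ m"
    using Bernoulli_inequality[of t m] t x by (intro mult_left_mono) auto
  also have "\<dots> = (1 - t ^ 2) ^ m"
    by (simp add: t_def power_mult_distrib[symmetric] power2_eq_square algebra_simps)
  also have "\<dots> \<le> 1" using t by (intro power_le_one) (auto simp: power_le_one)
  finally show ?thesis .
qed

lemma root_cubic_gap:
  fixes k n :: nat and x :: real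
  assumes hk: "k \<ge> 2" and x: "0 < x" "x < 1" and eq: "P n k x = Q n k x"
  shows "real (Suc k choose 3) * (x ^ (n - 1)) ^ 3 \<le> 4 * (real k + 1) * (x ^ (n - k) - x ^ (n - 1))"
proof -
  define y where "y = x ^ (n - 1)"
  have "2 * real (k + 1) * (y / 2) + 2 * real (k + 1 choose 3) * (y / 2) ^ 3
        \<le> (1 + y / 2) ^ (k + 1) - (1 - y / 2) ^ (k + 1)"
    using x hk by (intro binomial_odd_difference_lower_bound) (auto simp: y_def)
  also have "\<dots> = (real k + 1) * x ^ (n - k)"
    using eq by (simp add: P_def Q_def y_def)
  finally have "(real k + 1) * y + real (Suc k choose 3) * y ^ 3 / 4 \<le> (real k + 1) * x ^ (n - k)"
    by (simp add: power_divide algebra_simps)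
  then show ?thesis by (simp add: y_def algebra_simps)
qed

lemma root_quartic_bound:
  fixes k n :: nat and x :: real
  assumes hk: "k \<ge> 2" and hn: "n > k" and x: "0 < x" "x < 1"
    and eq: "P n k x = Q n k x"
  shows "(x ^ (n - 1)) ^ 4 * (real n - 1) \<le> 4 * (real k + 1) * (real k - 1) / real (Suc k choose 3)"
proof -
  define y where "y = x ^ (n - 1)"
  define C where "C = real (Suc k choose 3)"
  have C: "C > 0" using hk by (simp add: C_def)
  have y: "0 \<le> y" using x by (simp add: y_def)
  have "x ^ (n - k) - y \<le> real (k - 1) * (1 - x)"
    using power_diff_le[of x "n - k" "k - 1"] x hn hk by (simp add: y_def)
  then have cubic: "C * y ^ 3 \<le> 4 * (real k + 1) * ((real k - 1) * (1 - x))"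
    using root_cubic_gap[OF hk x eq] hk
    by (simp add: C_def y_def of_nat_diff order_trans mult_left_mono)
  have weight: "(real n - 1) * (1 - x) * y \<le> 1"
    using power_times_gap_le_one[of x "n - 1"] x hn by (simp add: y_def of_nat_diff)
  have "C * (y ^ 4 * (real n - 1)) = (C * y ^ 3) * ((real n - 1) * y)"
    by (simp add: power_numeral_reduce algebra_simps)
  also have "\<dots> \<le> (4 * (real k + 1) * ((real k - 1) * (1 - x))) * ((real n - 1) * y)"
    using cubic hn y by (intro mult_right_mono) auto
  also have "\<dots> = 4 * (real k + 1) * (real k - 1) * ((real n - 1) * (1 - x) * y)"
    by (simp add: algebra_simps)
  also have "\<dots> \<le> 4 * (real k + 1) * (real k - 1)"
    using weight hk by (intro mult_left_le) auto
  finally show ?thesis using C by (simp add: y_def C_def pos_le_divide_eq mult.commute)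
qed

lemma roots_power_tendsto_zero:
  fixes k :: nat and \<xi> :: "nat \<Rightarrow> real"
  assumes hk: "k \<ge> 2"
    and h\<xi>: "\<And>n. n > k \<Longrightarrow> 0 < \<xi> n \<and> \<xi> n < 1 \<and> P n k (\<xi> n) = Q n k (\<xi> n)"
  shows "(\<lambda>n. \<xi> n ^ (n - 1)) \<longlonglongrightarrow> 0"
proof -
  define K where "K = 4 * (real k + 1) * (real k - 1) / real (Suc k choose 3)"
  have "(\<lambda>n. K / (real n - 1)) \<longlonglongrightarrow> 0" by real_asymp
  from tendsto_real_root[OF this, of 4]
  have bound_lim: "(\<lambda>n. root 4 (K / (real n - 1))) \<longlonglongrightarrow> 0" by simp
  show ?thesis
  proof (rule tendsto_sandwich[OF _ _ tendsto_const bound_lim])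
    show "\<forall>\<^sub>F n in sequentially. 0 \<le> \<xi> n ^ (n - 1)"
      using eventually_gt_at_top[of k] by eventually_elim (use h\<xi> in \<open>auto intro: less_imp_le\<close>)
    show "\<forall>\<^sub>F n in sequentially. \<xi> n ^ (n - 1) \<le> root 4 (K / (real n - 1))"
      using eventually_gt_at_top[of k]
    proof eventually_elim
      case (elim n)
      have h: "0 < \<xi> n" "\<xi> n < 1" "P n k (\<xi> n) = Q n k (\<xi> n)" using h\<xi>[OF elim] by auto
      have "(\<xi> n ^ (n - 1)) ^ 4 * (real n - 1) \<le> K"
        using root_quartic_bound[OF hk elim h] by (simp add: K_def)
      moreover have "real n - 1 > 0" using elim hk by simp
      ultimately have "(\<xi> n ^ (n - 1)) ^ 4 \<le> K / (real n - 1)" by (simp add: pos_le_divide_eq)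
      then have "root 4 ((\<xi> n ^ (n - 1)) ^ 4) \<le> root 4 (K / (real n - 1))" by simp
      then show ?case using h by (simp add: real_root_power_cancel)
    qed
  qed
qed

theorem lemma5p4:
  fixes k :: nat and \<xi> :: "nat \<Rightarrow> real" and np :: "nat \<Rightarrow> nat" and \<alpha> :: ereal
  assumes hk: "k \<ge> 2"
    and h\<xi>: "\<And>n. n > k \<Longrightarrow> 0 < \<xi> n \<and> \<xi> n < 1 \<and> P n k (\<xi> n) = Q n k (\<xi> n)"
    and h\<alpha>: "\<alpha> = limsup (\<lambda>n. ereal (\<xi> n ^ (n - 1)))"
    and hmono: "strict_mono np"
    and hnp: "\<And>p. np p > k"
    and hlim: "(\<lambda>p. ereal (\<xi> (np p) ^ (np p - 1))) \<longlonglongrightarrow> \<alpha>"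
  shows "\<alpha> = 0 \<and> (\<lambda>p. \<xi> (np p) ^ (np p - 1)) \<longlonglongrightarrow> 0"
proof -
  have sub: "(\<lambda>p. \<xi> (np p) ^ (np p - 1)) \<longlonglongrightarrow> 0"
    using LIMSEQ_subseq_LIMSEQ[OF roots_power_tendsto_zero[OF hk h\<xi>] hmono]
    by (simp add: o_def)
  then have "(\<lambda>p. ereal (\<xi> (np p) ^ (np p - 1))) \<longlonglongrightarrow> ereal 0"
    by (simp add: lim_ereal)
  with hlim have "\<alpha> = ereal 0" using LIMSEQ_unique by blast
  with sub show ?thesis by (simp add: zero_ereal_def)
qed

end
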